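(* Let $k$ be a field, $R=k[x_1,\dots,x_n]$, and $I=(x_1^{a_1},\dots,x_n^{a_n},x_1^{b_1}\cdots x_n^{b_n})$ with $0\le b_i<a_i$ for all $i$ and $b_i\neq0$, $b_j\ne 0$ for at least two distinct indices $i,j$. For each $i$ with $b_i\neq 0$ set $d_i=\gcd(a_i,b_i)$, $a_i'=a_i/d_i$, $b_i'=b_i/d_i$, $c_i=d_i$; for $i$ with $b_i=0$ set $a_i'=a_i$, $b_i'=0$, $c_i=1$. Let $I'=(x_1^{a_1'},\dots,x_n^{a_n'},x_1^{b_1'}\cdots x_n^{b_n'})$, and let $\delta$ be the $k$-algebra endomorphism of $R[T_1,\dots,T_{n+1}]$ with $\delta(T_j)=T_j$ for all $j$ and $\delta(x_i)=x_i^{c_i}$. Let $\mathcal J$ (resp. $\mathcal J'$) be the defining ideal of the Rees algebra of $I$ (resp. $I'$), i.e. the kernel of $R[T_1,\dots,T_{n+1}]\to R[IT]$ sending $T_i\mapsto x_i^{a_i}T$ ($i\le n$), $T_{n+1}\mapsto x^{b}T$ (resp. with the primed exponents). Then: (1) $\mathcal J$ is generated by $\delta(\mathcal J')$; moreover $\mathcal J$ and $\mathcal J'$ have the same number of minimal binomial generators, with the same degrees in $T_1,\dots,T_{n+1}$. (2) If $J'=(x_1^{a_1'},\dots,x_n^{a_n'})$ is a reduction of $I'$, then $J=(x_1^{a_1},\dots,x_n^{a_n})$ is a reduction of $I$ and $\operatorname{red}_J(I)=\operatorname{red}_{J'}(I')$.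
   Context: For ideals $J\subset I$, $J$ is a reduction of $I$ if $JI^{r}=I^{r+1}$ for some $r\ge0$; the least such $r$ is the reduction number $\operatorname{red}_J(I)$. *)

theory Defs
  imports Main "HOL-Library.Poly_Mapping"
begin

definition is_ideal :: "'a::comm_ring_1 set \<Rightarrow> bool" where
  "is_ideal I \<longleftrightarrow> 0 \<in> I \<and> (\<forall>x\<in>I. \<forall>y\<in>I. x + y \<in> I) \<and> (\<forall>r. \<forall>x\<in>I. r * x \<in> I)"

definition ideal_gen :: "'a::comm_ring_1 set \<Rightarrow> 'a set" where
  "ideal_gen S = \<Inter>{I. is_ideal I \<and> S \<subseteq> I}"

definition ideal_mult :: "'a::comm_ring_1 set \<Rightarrow> 'a set \<Rightarrow> 'a set" where
  "ideal_mult I J = ideal_gen {x * y | x y. x \<in> I \<and> y \<in> J}"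

primrec ideal_pow :: "'a::comm_ring_1 set \<Rightarrow> nat \<Rightarrow> 'a set" where
  "ideal_pow I 0 = UNIV"
| "ideal_pow I (Suc r) = ideal_mult (ideal_pow I r) I"

definition is_reduction :: "'a::comm_ring_1 set \<Rightarrow> 'a set \<Rightarrow> bool" where
  "is_reduction J I \<longleftrightarrow> J \<subseteq> I \<and> (\<exists>r. ideal_mult J (ideal_pow I r) = ideal_pow I (Suc r))"

definition red_num :: "'a::comm_ring_1 set \<Rightarrow> 'a set \<Rightarrow> nat" where
  "red_num J I = (LEAST r. ideal_mult J (ideal_pow I r) = ideal_pow I (Suc r))"

definition minimal_gens :: "'a::comm_ring_1 set \<Rightarrow> 'a set \<Rightarrow> bool" where
  "minimal_gens G I \<longleftrightarrow> ideal_gen G = I \<and> (\<forall>H. H \<subset> G \<longrightarrow> ideal_gen H \<noteq> I)"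

type_synonym ('v,'k) mpoly = "('v \<Rightarrow>\<^sub>0 nat) \<Rightarrow>\<^sub>0 'k"

definition binomial :: "('v,'k::zero) mpoly \<Rightarrow> bool" where
  "binomial p \<longleftrightarrow> card (Poly_Mapping.keys p) \<le> 2"

text \<open>k-linear map induced by a map on monomials (a k-algebra hom when f is a monoid hom).\<close>
definition mono_map :: "(('v \<Rightarrow>\<^sub>0 nat) \<Rightarrow> ('w \<Rightarrow>\<^sub>0 nat)) \<Rightarrow> ('v,'k::comm_ring_1) mpoly \<Rightarrow> ('w,'k) mpoly" where
  "mono_map f p = (\<Sum>m\<in>Poly_Mapping.keys p. Poly_Mapping.single (f m) (Poly_Mapping.lookup p m))"

definition xmon :: "('n::finite \<Rightarrow> nat) \<Rightarrow> ('n,'k::comm_ring_1) mpoly" where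
  "xmon v = Poly_Mapping.single (Abs_poly_mapping v) 1"

definition mon_ideal :: "('n::finite \<Rightarrow> nat) \<Rightarrow> ('n \<Rightarrow> nat) \<Rightarrow> ('n,'k::comm_ring_1) mpoly set" where
  "mon_ideal a b = ideal_gen ((\<lambda>i. xmon (\<lambda>j. if j = i then a i else 0)) ` UNIV \<union> {xmon b})"

definition pure_ideal :: "('n::finite \<Rightarrow> nat) \<Rightarrow> ('n,'k::comm_ring_1) mpoly set" where
  "pure_ideal a = ideal_gen ((\<lambda>i. xmon (\<lambda>j. if j = i then a i else 0)) ` UNIV)"

text \<open>Exponent vector of the j-th generator: Some i gives x_i^{a_i}, None gives x^b (= T_{n+1}).\<close>
definition gen_exp :: "('n \<Rightarrow> nat) \<Rightarrow> ('n \<Rightarrow> nat) \<Rightarrow> 'n option \<Rightarrow> 'n \<Rightarrow> nat" where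
  "gen_exp a b j = (case j of Some i \<Rightarrow> (\<lambda>l. if l = i then a i else 0) | None \<Rightarrow> b)"

text \<open>R[T]: variables Inl i = x_i, Inr (Some i) = T_i, Inr None = T_{n+1}.
  R[t]: variables Some i = x_i, None = t.
  Rees map on monomials: x^u T^beta \<mapsto> x^(u + \<Sum> beta_j e_j) t^(|beta|).\<close>
definition rees_mono :: "('n::finite \<Rightarrow> nat) \<Rightarrow> ('n \<Rightarrow> nat) \<Rightarrow> ('n + 'n option \<Rightarrow>\<^sub>0 nat) \<Rightarrow> ('n option \<Rightarrow>\<^sub>0 nat)" where
  "rees_mono a b m = Abs_poly_mapping (\<lambda>v. case v of
       Some i \<Rightarrow> Poly_Mapping.lookup m (Inl i) + (\<Sum>j\<in>UNIV. Poly_Mapping.lookup m (Inr j) * gen_exp a b j i)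
     | None \<Rightarrow> (\<Sum>j\<in>UNIV. Poly_Mapping.lookup m (Inr j)))"

definition rees_ideal :: "('n::finite \<Rightarrow> nat) \<Rightarrow> ('n \<Rightarrow> nat) \<Rightarrow> ('n + 'n option, 'k::comm_ring_1) mpoly set" where
  "rees_ideal a b = {p. mono_map (rees_mono a b) p = (0 :: ('n option,'k) mpoly)}"

definition delta_mono :: "('n \<Rightarrow> nat) \<Rightarrow> ('n + 'n option \<Rightarrow>\<^sub>0 nat) \<Rightarrow> ('n + 'n option \<Rightarrow>\<^sub>0 nat)" where
  "delta_mono c m = Abs_poly_mapping (\<lambda>v. case v of Inl i \<Rightarrow> c i * Poly_Mapping.lookup m (Inl i) | Inr j \<Rightarrow> Poly_Mapping.lookup m (Inr j))"

definition delta :: "('n::finite \<Rightarrow> nat) \<Rightarrow> ('n + 'n option, 'k::comm_ring_1) mpoly \<Rightarrow> ('n + 'n option, 'k) mpoly" where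
  "delta c = mono_map (delta_mono c)"

definition tdeg :: "('n::finite + 'n option \<Rightarrow>\<^sub>0 nat) \<Rightarrow> nat" where
  "tdeg m = (\<Sum>j\<in>UNIV. Poly_Mapping.lookup m (Inr j))"

definition tdegs :: "('n::finite + 'n option, 'k::zero) mpoly \<Rightarrow> nat set" where
  "tdegs p = tdeg ` Poly_Mapping.keys p"

end

theory Submission
  imports Defs
begin

(*
  Polynomials are finitely supported coefficient functions on
  exponent vectors, and both maps of the theorem are induced by additive maps
  of exponent monoids: the Rees map R[T] -> R[t] and the substitution
  delta: x_i |-> x_i^(c_i).  With a = c*a' and b = c*b' componentwise, the
  Rees map of (a,b) after delta equals the Rees map of (a',b') followed by
  x_i |-> x_i^(c_i) in R[t].
  The theorem then follows: delta maps a minimal binomial generating set of J'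
  bijectively onto one of J keeping T-degrees, and it extends (J', I') to
  (J, I).
*)

abbreviation lookup where "lookup \<equiv> Poly_Mapping.lookup"
abbreviation keys where "keys \<equiv> Poly_Mapping.keys"
abbreviation single where "single \<equiv> Poly_Mapping.single"

section \<open>Ideals generated by sets\<close>

lemma is_ideal_gen: "is_ideal (ideal_gen S)"
  unfolding ideal_gen_def is_ideal_def by auto

lemma ideal_gen_sub: "S \<subseteq> ideal_gen S"
  unfolding ideal_gen_def by auto

lemma ideal_gen_least: "is_ideal I \<Longrightarrow> S \<subseteq> I \<Longrightarrow> ideal_gen S \<subseteq> I"
  unfolding ideal_gen_def by auto

lemma ideal_gen_mono: "S \<subseteq> T \<Longrightarrow> ideal_gen S \<subseteq> ideal_gen T"
  by (meson ideal_gen_least ideal_gen_sub is_ideal_gen order_trans)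

lemma is_idealD:
  assumes "is_ideal I"
  shows "0 \<in> I" "x \<in> I \<Longrightarrow> y \<in> I \<Longrightarrow> x + y \<in> I" "x \<in> I \<Longrightarrow> r * x \<in> I"
  using assms unfolding is_ideal_def by auto

lemma ideal_UNIV: "is_ideal UNIV"
  unfolding is_ideal_def by auto

lemma ideal_one: "is_ideal I \<Longrightarrow> 1 \<in> I \<Longrightarrow> I = UNIV"
  by (metis UNIV_eq_I is_idealD(3) mult.right_neutral)

lemma is_ideal_mult: "is_ideal (ideal_mult I J)"
  unfolding ideal_mult_def by (rule is_ideal_gen)

lemma is_ideal_pow: "is_ideal (ideal_pow I r)"
  by (cases r) (auto simp: ideal_UNIV is_ideal_mult)

text \<open>The colon ideal \<open>K : T\<close> of all elements multiplying \<open>T\<close> into \<open>K\<close>; it is the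
  tool for extending products from generators to generated ideals.\<close>

lemma is_ideal_colon:
  assumes K: "is_ideal K"
  shows "is_ideal {u. \<forall>t\<in>T. u * t \<in> K}"
  unfolding is_ideal_def
proof (intro conjI ballI allI)
  show "0 \<in> {u. \<forall>t\<in>T. u * t \<in> K}" using is_idealD(1)[OF K] by simp
  show "x + y \<in> {u. \<forall>t\<in>T. u * t \<in> K}" if "x \<in> {u. \<forall>t\<in>T. u * t \<in> K}"
    "y \<in> {u. \<forall>t\<in>T. u * t \<in> K}" for x y
    using that is_idealD(2)[OF K] by (simp add: distrib_right)
  show "r * x \<in> {u. \<forall>t\<in>T. u * t \<in> K}" if "x \<in> {u. \<forall>t\<in>T. u * t \<in> K}" for r x
    using that is_idealD(3)[OF K] by (simp add: mult.assoc)
qed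

lemma ideal_gen_mult_closed:
  assumes K: "is_ideal K" and ST: "\<And>s t. s \<in> S \<Longrightarrow> t \<in> T \<Longrightarrow> s * t \<in> K"
    and u: "u \<in> ideal_gen S" and v: "v \<in> ideal_gen T"
  shows "u * v \<in> K"
proof -
  have "ideal_gen S \<subseteq> {u. \<forall>t\<in>T. u * t \<in> K}"
    using ST by (intro ideal_gen_least is_ideal_colon[OF K]) auto
  then have "T \<subseteq> {v. \<forall>s\<in>{u}. v * s \<in> K}"
    using u by (auto simp: mult.commute[of _ u])
  then have "ideal_gen T \<subseteq> {v. \<forall>s\<in>{u}. v * s \<in> K}"
    by (intro ideal_gen_least is_ideal_colon[OF K])
  then have "v * u \<in> K" using v by blast
  then show ?thesis by (metis mult.commute)
qed

lemma ideal_mult_gen: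
  "ideal_mult (ideal_gen S) (ideal_gen T) = ideal_gen {s * t | s t. s \<in> S \<and> t \<in> T}"
  unfolding ideal_mult_def
proof (rule subset_antisym)
  show "ideal_gen {u * v |u v. u \<in> ideal_gen S \<and> v \<in> ideal_gen T}
      \<subseteq> ideal_gen {s * t |s t. s \<in> S \<and> t \<in> T}"
  proof (rule ideal_gen_least[OF is_ideal_gen], safe)
    fix u v assume uv: "u \<in> ideal_gen S" "v \<in> ideal_gen T"
    have "s * t \<in> ideal_gen {s * t |s t. s \<in> S \<and> t \<in> T}" if "s \<in> S" "t \<in> T" for s t
      using that by (intro ideal_gen_sub[THEN subsetD]) blast
    then show "u * v \<in> ideal_gen {s * t |s t. s \<in> S \<and> t \<in> T}"
      using uv by (rule ideal_gen_mult_closed[OF is_ideal_gen])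
  qed
  show "ideal_gen {s * t |s t. s \<in> S \<and> t \<in> T}
      \<subseteq> ideal_gen {u * v |u v. u \<in> ideal_gen S \<and> v \<in> ideal_gen T}"
  proof (rule ideal_gen_mono, safe)
    fix s t assume "s \<in> S" "t \<in> T"
    then show "\<exists>u v. s * t = u * v \<and> u \<in> ideal_gen S \<and> v \<in> ideal_gen T"
      using ideal_gen_sub[of S] ideal_gen_sub[of T] by auto
  qed
qed

section \<open>Polynomial maps induced by maps of monomials\<close>

lemma poly_expand: "p = (\<Sum>m\<in>keys p. single m (lookup p m))"
proof (rule poly_mapping_eqI)
  fix k
  have "lookup (\<Sum>m\<in>keys p. single m (lookup p m)) k = (\<Sum>m\<in>keys p. if m = k then lookup p m else 0)"
    by (simp add: lookup_sum lookup_single when_def)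
  also have "\<dots> = lookup p k"
    by (cases "k \<in> keys p") (simp_all add: in_keys_iff)
  finally show "lookup p k = lookup (\<Sum>m\<in>keys p. single m (lookup p m)) k" by simp
qed

lemma poly_add_induct:
  fixes p :: "'a \<Rightarrow>\<^sub>0 'b::comm_monoid_add"
  assumes "P 0" "\<And>m a. P (single m a)" "\<And>p q. P p \<Longrightarrow> P q \<Longrightarrow> P (p + q)"
  shows "P p"
proof -
  have "P (\<Sum>m\<in>A. single m (lookup p m))" if "finite A" for A
    using that by (induction A rule: finite_induct) (auto intro: assms)
  then show ?thesis by (metis finite_keys poly_expand)
qed

lemma mono_map_superset:
  assumes "finite K" "keys p \<subseteq> K"
  shows "mono_map f p = (\<Sum>m\<in>K. single (f m) (lookup p m))"
  unfolding mono_map_def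
  by (rule sum.mono_neutral_left) (use assms in \<open>auto simp: in_keys_iff\<close>)

lemma mono_map_add: "mono_map f (p + q) = mono_map f p + mono_map f q"
proof -
  let ?K = "keys p \<union> keys q"
  have "mono_map f (p + q) = (\<Sum>m\<in>?K. single (f m) (lookup (p + q) m))"
    by (rule mono_map_superset) (auto simp: keys_add)
  also have "\<dots> = (\<Sum>m\<in>?K. single (f m) (lookup p m)) + (\<Sum>m\<in>?K. single (f m) (lookup q m))"
    by (simp add: lookup_add single_add sum.distrib)
  also have "\<dots> = mono_map f p + mono_map f q"
    by (subst (1 2) mono_map_superset[where K = ?K]) auto
  finally show ?thesis .
qed

lemma mono_map_zero [simp]: "mono_map f 0 = 0"
  by (simp add: mono_map_def)

lemma mono_map_single [simp]: "mono_map f (single m a) = single (f m) a"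
  by (subst mono_map_superset[where K = "{m}"]) auto

lemma mono_map_diff: "mono_map f (p - q) = mono_map f p - mono_map f q"
  by (metis add_diff_cancel eq_diff_eq mono_map_add)

lemma mono_map_comp: "mono_map f (mono_map g p) = mono_map (f \<circ> g) p"
  by (induction p rule: poly_add_induct) (auto simp: mono_map_add)

lemma lookup_mono_map: "lookup (mono_map f p) n = (\<Sum>m\<in>keys p. if f m = n then lookup p m else 0)"
  unfolding mono_map_def by (simp add: lookup_sum lookup_single when_def)

definition additive :: "(('v \<Rightarrow>\<^sub>0 nat) \<Rightarrow> ('w \<Rightarrow>\<^sub>0 nat)) \<Rightarrow> bool" where
  "additive f \<longleftrightarrow> (\<forall>x y. f (x + y) = f x + f y)"

lemma additive_zero: "additive f \<Longrightarrow> f 0 = 0"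
  unfolding additive_def by (metis add.right_neutral add_left_cancel)

lemma mono_map_mult:
  fixes p q :: "('v,'k::comm_ring_1) mpoly"
  assumes "additive f"
  shows "mono_map f (p * q) = mono_map f p * mono_map f q"
proof (induction p rule: poly_add_induct)
  case (2 m a)
  show ?case
  proof (induction q rule: poly_add_induct)
    case (2 m' b)
    then show ?case using assms by (simp add: mult_single additive_def)
  next
    case (3 p q)
    then show ?case by (simp add: distrib_left mono_map_add)
  qed simp
next
  case (3 p q)
  then show ?case by (simp add: distrib_right mono_map_add)
qed simp

lemma mono_map_one:
  assumes "additive f"
  shows "mono_map f (1 :: ('v,'k::comm_ring_1) mpoly) = 1"
  using additive_zero[OF assms] by (simp flip: single_one)

lemma mono_map_inj_lookup:
  assumes "inj f"
  shows "lookup (mono_map f p) (f m) = lookup p m"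
proof -
  have "lookup (mono_map f p) (f m) = (\<Sum>k\<in>keys p. if k = m then lookup p k else 0)"
    unfolding lookup_mono_map using assms by (intro sum.cong) (auto dest: injD)
  also have "\<dots> = lookup p m"
    by (cases "m \<in> keys p") (simp_all add: in_keys_iff)
  finally show ?thesis .
qed

lemma mono_map_nrange: "n \<notin> range f \<Longrightarrow> lookup (mono_map f p) n = 0"
  unfolding lookup_mono_map by (intro sum.neutral) auto

lemma mono_map_inj: "inj f \<Longrightarrow> inj (mono_map f)"
  by (rule injI, rule poly_mapping_eqI) (metis mono_map_inj_lookup)

lemma keys_mono_map_inj:
  assumes "inj f"
  shows "keys (mono_map f p) = f ` keys p"
proof safe
  fix n assume n: "n \<in> keys (mono_map f p)"
  then have "n \<in> range f" using mono_map_nrange by (metis in_keys_iff)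
  then obtain m where "n = f m" by auto
  then show "n \<in> f ` keys p" using n mono_map_inj_lookup[OF assms] by (metis image_eqI in_keys_iff)
next
  fix m assume "m \<in> keys p"
  then show "f m \<in> keys (mono_map f p)" using mono_map_inj_lookup[OF assms] by (metis in_keys_iff)
qed

lemma binomial_mono_map_inj: "inj f \<Longrightarrow> binomial p \<Longrightarrow> binomial (mono_map f p)"
  unfolding binomial_def keys_mono_map_inj by (metis card_image_le finite_keys le_trans)

lemma single_mult_shift: "single m 1 * p = mono_map (\<lambda>k. m + k) p"
  by (induction p rule: poly_add_induct) (auto simp: mult_single distrib_left mono_map_add)

lemma ideal_gen_image_gen:
  fixes S :: "('v,'k::comm_ring_1) mpoly set"
  assumes "additive f"
  shows "ideal_gen (mono_map f ` ideal_gen S) = ideal_gen (mono_map f ` S)"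
proof (rule subset_antisym)
  let ?E = "ideal_gen (mono_map f ` S)"
  have E: "is_ideal ?E" by (rule is_ideal_gen)
  have "is_ideal {x. mono_map f x \<in> ?E}"
    unfolding is_ideal_def
    using is_idealD[OF E] by (simp add: mono_map_add mono_map_mult[OF assms])
  moreover have "S \<subseteq> {x. mono_map f x \<in> ?E}"
    using ideal_gen_sub[of "mono_map f ` S"] by auto
  ultimately have "ideal_gen S \<subseteq> {x. mono_map f x \<in> ?E}" by (rule ideal_gen_least)
  then show "ideal_gen (mono_map f ` ideal_gen S) \<subseteq> ?E"
    by (intro ideal_gen_least[OF is_ideal_gen]) auto
  show "?E \<subseteq> ideal_gen (mono_map f ` ideal_gen S)"
    by (rule ideal_gen_mono) (use ideal_gen_sub[of S] in auto)
qed

section \<open>Kernels of monomial maps are generated by binomials\<close>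

definition bin :: "('v \<Rightarrow>\<^sub>0 nat) \<Rightarrow> ('v \<Rightarrow>\<^sub>0 nat) \<Rightarrow> ('v,'k::comm_ring_1) mpoly" where
  "bin u v = single u 1 - single v 1"

definition kerm :: "(('v \<Rightarrow>\<^sub>0 nat) \<Rightarrow> ('w \<Rightarrow>\<^sub>0 nat)) \<Rightarrow> ('v,'k::comm_ring_1) mpoly set" where
  "kerm f = {p. mono_map f p = 0}"

definition bins :: "(('v \<Rightarrow>\<^sub>0 nat) \<Rightarrow> ('w \<Rightarrow>\<^sub>0 nat)) \<Rightarrow> ('v,'k::comm_ring_1) mpoly set" where
  "bins f = {bin u v | u v. f u = f v}"

lemma ker_ideal: "additive f \<Longrightarrow> is_ideal (kerm f)"
  unfolding is_ideal_def kerm_def by (simp add: mono_map_add mono_map_mult)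

lemma bin_in_ker: "f u = f v \<Longrightarrow> bin u v \<in> kerm f"
  by (simp add: kerm_def bin_def mono_map_diff)

lemma bins_ker: "bins f \<subseteq> kerm f"
  unfolding bins_def using bin_in_ker by blast

lemma binomial_bin: "binomial (bin u v)"
proof -
  have "keys (bin u v :: ('a,'b::comm_ring_1) mpoly) \<subseteq> {u, v}"
    unfolding bin_def by (auto simp: in_keys_iff lookup_minus lookup_single when_def split: if_splits)
  then have "card (keys (bin u v :: ('a,'b) mpoly)) \<le> card {u, v}"
    by (rule card_mono[rotated]) auto
  also have "\<dots> \<le> 2" by (simp add: card_insert_if)
  finally show ?thesis unfolding binomial_def .
qed

text \<open>A polynomial in the kernel is a combination of kernel binomials: each term
  \<open>c x\<^sup>m\<close> is cancelled by a term \<open>x\<^sup>m\<^sup>'\<close> in the same fibre, and \<open>c (x\<^sup>m - x\<^sup>m\<^sup>')\<close>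
  removes it (induction on the number of terms).\<close>

lemma ker_span:
  fixes p :: "('v,'k::comm_ring_1) mpoly"
  assumes "mono_map f p = 0"
  shows "p \<in> ideal_gen (bins f)"
  using assms
proof (induction "card (keys p)" arbitrary: p rule: less_induct)
  case less
  have I: "is_ideal (ideal_gen (bins f :: ('v,'k) mpoly set))" by (rule is_ideal_gen)
  show ?case
  proof (cases "p = 0")
    case True then show ?thesis using is_idealD(1)[OF I] by simp
  next
    case False
    then obtain m where m: "m \<in> keys p" by (metis keys_eq_empty ex_in_conv)
    have "\<exists>m'\<in>keys p. m' \<noteq> m \<and> f m' = f m"
    proof (rule ccontr)
      assume "\<not> ?thesis"
      then have "lookup (mono_map f p) (f m) = (\<Sum>k\<in>keys p. if k = m then lookup p k else 0)"
        unfolding lookup_mono_map by (intro sum.cong) auto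
      also have "\<dots> = lookup p m" using m by simp
      finally show False using less.prems m by (simp add: in_keys_iff)
    qed
    then obtain m' where m': "m' \<in> keys p" "m' \<noteq> m" "f m' = f m" by blast
    define c where "c = lookup p m"
    define q where "q = single 0 c * bin m m'"
    have q: "q = single m c - single m' c"
      by (simp add: q_def bin_def right_diff_distrib mult_single)
    have "keys (p - q) \<subseteq> keys p - {m}"
    proof
      fix k assume k: "k \<in> keys (p - q)"
      have "lookup (p - q) k = lookup p k - (c when m = k) + (c when m' = k)"
        by (simp add: q lookup_minus lookup_single)
      with k m' show "k \<in> keys p - {m}"
        by (auto simp: in_keys_iff c_def when_def split: if_splits)
    qed
    then have "card (keys (p - q)) < card (keys p)"
      using m by (intro psubset_card_mono) auto
    moreover have "mono_map f (p - q) = 0"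
      using less.prems m' by (simp add: q mono_map_diff)
    ultimately have "p - q \<in> ideal_gen (bins f)" using less.hyps by blast
    moreover have "bin m m' \<in> bins f" unfolding bins_def using m'(3) by force
    then have "q \<in> ideal_gen (bins f)"
      unfolding q_def by (intro is_idealD(3)[OF I] ideal_gen_sub[THEN subsetD])
    ultimately have "(p - q) + q \<in> ideal_gen (bins f)" by (rule is_idealD(2)[OF I])
    then show ?thesis by simp
  qed
qed

lemma dickson:
  fixes g :: "'b \<Rightarrow> 'v \<Rightarrow> nat"
  assumes "finite A"
  shows "\<exists>S0\<subseteq>S. finite S0 \<and> (\<forall>s\<in>S. \<exists>t\<in>S0. \<forall>v\<in>A. g t v \<le> g s v)"
  using assms
proof (induction A arbitrary: S rule: finite_induct)
  case empty
  show ?case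
  proof (cases "S = {}")
    case False
    then obtain x where "x \<in> S" by auto
    then show ?thesis by (intro exI[of _ "{x}"]) auto
  qed auto
next
  case (insert a A)
  obtain F where F: "F \<subseteq> S" "finite F" "\<forall>s\<in>S. \<exists>t\<in>F. \<forall>v\<in>A. g t v \<le> g s v"
    using insert.IH[of S] by blast
  text \<open>Members above some element of \<open>F\<close> in coordinate \<open>a\<close> are handled by \<open>F\<close>; the
    remaining ones have \<open>a\<close>-coordinate at most \<open>Y\<close>, and each of these finitely many
    layers is handled by the induction hypothesis.\<close>
  define Y where "Y = Max (insert 0 ((\<lambda>t. g t a) ` F))"
  have "\<forall>k. \<exists>F'. F' \<subseteq> {s\<in>S. g s a = k} \<and> finite F'
      \<and> (\<forall>s\<in>{s\<in>S. g s a = k}. \<exists>t\<in>F'. \<forall>v\<in>A. g t v \<le> g s v)"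
    using insert.IH by blast
  then obtain Fk where "\<forall>k. Fk k \<subseteq> {s\<in>S. g s a = k} \<and> finite (Fk k)
      \<and> (\<forall>s\<in>{s\<in>S. g s a = k}. \<exists>t\<in>Fk k. \<forall>v\<in>A. g t v \<le> g s v)"
    by (rule choice[THEN exE])
  then have Fk: "\<And>k. Fk k \<subseteq> {s\<in>S. g s a = k}" "\<And>k. finite (Fk k)"
    "\<And>k. \<forall>s\<in>{s\<in>S. g s a = k}. \<exists>t\<in>Fk k. \<forall>v\<in>A. g t v \<le> g s v"
    by simp_all
  define S0 where "S0 = F \<union> (\<Union>k\<in>{..Y}. Fk k)"
  have "S0 \<subseteq> S" using F(1) Fk(1) unfolding S0_def by blast
  moreover have "finite S0" using F(2) Fk(2) unfolding S0_def by blast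
  moreover have "\<exists>t\<in>S0. \<forall>v\<in>insert a A. g t v \<le> g s v" if s: "s \<in> S" for s
  proof -
    obtain t where t: "t \<in> F" "\<forall>v\<in>A. g t v \<le> g s v" using F(3) s by blast
    show ?thesis
    proof (cases "g t a \<le> g s a")
      case True then show ?thesis using t unfolding S0_def by blast
    next
      case False
      have "g t a \<le> Y" unfolding Y_def using t(1) F(2) by (intro Max_ge) auto
      with False have le: "g s a \<le> Y" by simp
      obtain t' where t': "t' \<in> Fk (g s a)" "\<forall>v\<in>A. g t' v \<le> g s v"
        using Fk(3)[of "g s a"] s by blast
      have "g t' a = g s a" using Fk(1) t'(1) by blast
      moreover have "t' \<in> S0" unfolding S0_def using le t'(1) by blast
      ultimately show ?thesis using t'(2) by (intro bexI[of _ t']) auto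
    qed
  qed
  ultimately show ?case by blast
qed

definition deg :: "('v::finite \<Rightarrow>\<^sub>0 nat) \<Rightarrow> nat" where
  "deg m = (\<Sum>x\<in>UNIV. lookup m x)"

lemma deg_add: "deg (u + w) = deg u + deg w"
  by (simp add: deg_def lookup_add sum.distrib)

lemma deg_zero: "deg m = 0 \<Longrightarrow> m = 0"
  by (rule poly_mapping_eqI) (simp add: deg_def)

text \<open>If every nontrivial pair \<open>(u,v)\<close> of a fibre of \<open>f\<close> lies componentwise above
  some nontrivial pair \<open>(u\<^sub>0,v\<^sub>0)\<close> of \<open>P\<close>, then an ideal containing the binomials of
  \<open>P\<close> contains all binomials of fibres:
  \<open>x\<^sup>u - x\<^sup>v = x\<^sup>w (x\<^sup>u\<^sup>0 - x\<^sup>v\<^sup>0) + x\<^sup>v\<^sup>0 (x\<^sup>w - x\<^sup>w\<^sup>')\<close>, where \<open>(w,w')\<close> is a pair of smaller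
  total degree in a fibre of \<open>f\<close>.\<close>

lemma bin_in_ideal_of_dominating:
  fixes f :: "('v::finite \<Rightarrow>\<^sub>0 nat) \<Rightarrow> ('w \<Rightarrow>\<^sub>0 nat)" and G :: "('v,'k::comm_ring_1) mpoly set"
  assumes hom: "additive f"
    and P: "\<And>u0 v0. (u0, v0) \<in> P \<Longrightarrow> f u0 = f v0 \<and> (u0, v0) \<noteq> (0, 0)"
    and dom: "\<And>u v. f u = f v \<Longrightarrow> (u, v) \<noteq> (0, 0) \<Longrightarrow>
       \<exists>(u0, v0)\<in>P. \<forall>x. lookup u0 x \<le> lookup u x \<and> lookup v0 x \<le> lookup v x"
    and G: "is_ideal G" "\<And>u0 v0. (u0, v0) \<in> P \<Longrightarrow> bin u0 v0 \<in> G"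
    and uv: "f u = f v"
  shows "bin u v \<in> G"
  using uv
proof (induction "deg u + deg v" arbitrary: u v rule: less_induct)
  case less
  show ?case
  proof (cases "(u, v) = (0, 0)")
    case True
    then have "(bin u v :: ('v,'k) mpoly) = 0" by (simp add: bin_def)
    then show ?thesis using is_idealD(1)[OF G(1)] by simp
  next
    case False
    then obtain u0 v0 where t: "(u0, v0) \<in> P"
      and le: "\<And>x. lookup u0 x \<le> lookup u x" "\<And>x. lookup v0 x \<le> lookup v x"
      using dom[OF less.prems] by blast
    define w where "w = Abs_poly_mapping (\<lambda>x. lookup u x - lookup u0 x)"
    define w' where "w' = Abs_poly_mapping (\<lambda>x. lookup v x - lookup v0 x)"
    have u: "u = u0 + w" by (rule poly_mapping_eqI) (use le in \<open>simp add: w_def lookup_add\<close>)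
    have v: "v = v0 + w'" by (rule poly_mapping_eqI) (use le in \<open>simp add: w'_def lookup_add\<close>)
    have f0: "f u0 = f v0" "(u0, v0) \<noteq> (0, 0)" using P[OF t] by auto
    have fw: "f w = f w'" using less.prems hom f0(1) unfolding u v additive_def by simp
    have "deg u0 + deg v0 > 0" using f0(2) deg_zero[of u0] deg_zero[of v0] by auto
    then have "deg w + deg w' < deg u + deg v" unfolding u v deg_add by linarith
    then have IH: "bin w w' \<in> G" using less.hyps fw by blast
    have "(bin u v :: ('v,'k) mpoly) = single w 1 * bin u0 v0 + single v0 1 * bin w w'"
      unfolding u v bin_def by (simp add: right_diff_distrib mult_single add.commute)
    then show ?thesis using is_idealD(2,3)[OF G(1)] G(2)[OF t] IH by metis
  qed
qed

text \<open>Finite generation of kernels of monomial maps: the binomials of the finitely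
  many minimal pairs (given by Dickson's lemma) generate the kernel.\<close>

lemma kernel_fin_gen:
  fixes f :: "('v::finite \<Rightarrow>\<^sub>0 nat) \<Rightarrow> ('w \<Rightarrow>\<^sub>0 nat)"
  assumes hom: "additive f"
  shows "\<exists>G. finite G \<and> G \<subseteq> (bins f :: ('v,'k::comm_ring_1) mpoly set) \<and> ideal_gen G = kerm f"
proof -
  define S where "S = {(u, v). f u = f v \<and> (u, v) \<noteq> (0, 0)}"
  define g where "g = (\<lambda>(u::'v \<Rightarrow>\<^sub>0 nat, v::'v \<Rightarrow>\<^sub>0 nat) z. case z of Inl x \<Rightarrow> lookup u x | Inr x \<Rightarrow> lookup v x)"
  obtain P where P: "P \<subseteq> S" "finite P" "\<forall>s\<in>S. \<exists>t\<in>P. \<forall>z\<in>(UNIV :: ('v + 'v) set). g t z \<le> g s z"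
    using dickson[of "UNIV :: ('v + 'v) set" S g] by auto
  define G where "G = (\<lambda>(u, v). bin u v :: ('v,'k) mpoly) ` P"
  have dom: "\<exists>(u0, v0)\<in>P. \<forall>x. lookup u0 x \<le> lookup u x \<and> lookup v0 x \<le> lookup v x"
    if uv: "f u = f v" "(u, v) \<noteq> (0, 0)" for u v
  proof -
    have "(u, v) \<in> S" using uv by (simp add: S_def)
    then obtain u0 v0 where t: "(u0, v0) \<in> P" "\<forall>z. g (u0, v0) z \<le> g (u, v) z"
      using P(3) by fastforce
    have "lookup u0 x \<le> lookup u x \<and> lookup v0 x \<le> lookup v x" for x
      using t(2)[rule_format, of "Inl x"] t(2)[rule_format, of "Inr x"] by (simp add: g_def)
    then show ?thesis using t(1) by blast
  qed
  have "bin u v \<in> ideal_gen G" if uv: "f u = f v" for u v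
  proof (rule bin_in_ideal_of_dominating[OF hom _ dom is_ideal_gen _ uv])
    fix u0 v0 assume t: "(u0, v0) \<in> P"
    then show "f u0 = f v0 \<and> (u0, v0) \<noteq> (0, 0)" using P(1) by (auto simp: S_def)
    from t show "bin u0 v0 \<in> ideal_gen G"
      unfolding G_def by (intro ideal_gen_sub[THEN subsetD]) force
  qed
  then have gen_bins: "bins f \<subseteq> ideal_gen G" unfolding bins_def by blast
  have "kerm f \<subseteq> ideal_gen G"
  proof
    fix p :: "('v,'k) mpoly" assume "p \<in> kerm f"
    then have "p \<in> ideal_gen (bins f)" using ker_span by (simp add: kerm_def)
    then show "p \<in> ideal_gen G" using ideal_gen_least[OF is_ideal_gen gen_bins] by blast
  qed
  moreover have "G \<subseteq> bins f" unfolding G_def bins_def using P(1) S_def by auto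
  moreover then have "ideal_gen G \<subseteq> kerm f"
    using bins_ker ideal_gen_least[OF ker_ideal[OF hom]] by blast
  ultimately show ?thesis using P(2) G_def by blast
qed

text \<open>A finite generating set contains a minimal one (take one of least cardinality).\<close>

lemma minimal_subset:
  assumes "finite G0" "ideal_gen G0 = I"
  shows "\<exists>G\<subseteq>G0. minimal_gens G I"
proof -
  define P where "P H \<longleftrightarrow> H \<subseteq> G0 \<and> ideal_gen H = I" for H
  obtain H where H: "P H" and least: "\<And>H'. P H' \<Longrightarrow> card H \<le> card H'"
    using ex_has_least_nat[of P G0 card] assms by (auto simp: P_def)
  have "ideal_gen H' \<noteq> I" if "H' \<subset> H" for H'
  proof
    assume "ideal_gen H' = I"
    then have "card H \<le> card H'" using that H by (intro least) (auto simp: P_def)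
    moreover have "card H' < card H"
      using that H assms(1) by (intro psubset_card_mono) (auto simp: P_def intro: finite_subset)
    ultimately show False by simp
  qed
  then show ?thesis using H unfolding P_def minimal_gens_def by blast
qed

section \<open>The substitution \<open>x\<^sub>v \<mapsto> x\<^sub>v\<^bsup>C v\<^esup>\<close>\<close>

definition scale :: "('v::finite \<Rightarrow> nat) \<Rightarrow> ('v \<Rightarrow>\<^sub>0 nat) \<Rightarrow> ('v \<Rightarrow>\<^sub>0 nat)" where
  "scale C m = Abs_poly_mapping (\<lambda>v. C v * lookup m v)"

lemma lookup_scale [simp]: "lookup (scale C m) v = C v * lookup m v"
  by (simp add: scale_def)

lemma scale_additive: "additive (scale C)"
  unfolding additive_def by (auto intro!: poly_mapping_eqI simp: lookup_add algebra_simps)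

lemma scale_inj: "\<forall>v. C v > 0 \<Longrightarrow> inj (scale C)"
  by (rule injI, rule poly_mapping_eqI) (metis lookup_scale mult_left_cancel not_gr0)

text \<open>A left inverse of the substitution: keep only the terms whose exponents are
  multiples of \<open>C\<close>, and divide them by \<open>C\<close>.\<close>

definition unscale :: "('v::finite \<Rightarrow> nat) \<Rightarrow> ('v,'k::comm_ring_1) mpoly \<Rightarrow> ('v,'k) mpoly" where
  "unscale C p = Abs_poly_mapping (\<lambda>m. lookup p (scale C m))"

definition ext :: "('v::finite \<Rightarrow> nat) \<Rightarrow> ('v,'k::comm_ring_1) mpoly set \<Rightarrow> ('v,'k) mpoly set" where
  "ext C A = ideal_gen (mono_map (scale C) ` A)"

text \<open>With all weights positive the substitution is injective on monomials; this is
  what makes every ideal the contraction of its extension.\<close>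

context
  fixes C :: "'v::finite \<Rightarrow> nat"
  assumes Cpos: "\<forall>v. C v > 0"
begin

lemma lookup_unscale: "lookup (unscale C p) m = lookup p (scale C m)"
proof -
  have "finite (scale C -` keys p)"
    using scale_inj[OF Cpos] by (intro finite_vimageI) auto
  moreover have "{m. lookup p (scale C m) \<noteq> 0} \<subseteq> scale C -` keys p"
    by (auto simp: in_keys_iff)
  ultimately have "finite {m. lookup p (scale C m) \<noteq> 0}" by (rule finite_subset[rotated])
  then show ?thesis by (simp add: unscale_def lookup_Abs_poly_mapping)
qed

lemma unscale_add: "unscale C (p + q) = unscale C p + unscale C q"
  by (rule poly_mapping_eqI) (simp add: lookup_unscale lookup_add)

lemma unscale_zero: "unscale C 0 = 0"
  by (rule poly_mapping_eqI) (simp add: lookup_unscale)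

lemma unscale_scale: "unscale C (mono_map (scale C) q) = q"
  by (rule poly_mapping_eqI) (simp add: lookup_unscale mono_map_inj_lookup[OF scale_inj[OF Cpos]])

lemma unscale_monomial_mult:
  "unscale C (single m 1 * mono_map (scale C) q) \<in> {single m1 1 * q | m1. True} \<union> {0}"
proof (cases "m \<in> range (scale C)")
  case True
  then obtain m1 where m1: "m = scale C m1" by auto
  have "(\<lambda>k. m + k) \<circ> scale C = scale C \<circ> (\<lambda>k. m1 + k)"
    using scale_additive[of C] unfolding m1 additive_def by (simp add: fun_eq_iff)
  then have "single m 1 * mono_map (scale C) q = mono_map (scale C) (single m1 1 * q)"
    by (simp add: single_mult_shift mono_map_comp)
  then have "unscale C (single m 1 * mono_map (scale C) q) = single m1 1 * q"
    by (simp add: unscale_scale)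
  then show ?thesis by blast
next
  case False
  have "scale C n \<notin> range ((\<lambda>k. m + k) \<circ> scale C)" for n
  proof
    assume "scale C n \<in> range ((\<lambda>k. m + k) \<circ> scale C)"
    then obtain k where k: "scale C n = m + scale C k" by auto
    have "m = scale C (Abs_poly_mapping (\<lambda>v. lookup n v - lookup k v))"
    proof (rule poly_mapping_eqI)
      fix v
      have "C v * lookup n v = lookup m v + C v * lookup k v"
        using arg_cong[OF k, of "\<lambda>x. lookup x v"] by (simp add: lookup_add)
      then show "lookup m v = lookup (scale C (Abs_poly_mapping (\<lambda>v. lookup n v - lookup k v))) v"
        by (simp add: diff_mult_distrib2)
    qed
    then show False using False by auto
  qed
  then have "unscale C (single m 1 * mono_map (scale C) q) = 0"
    by (intro poly_mapping_eqI)
       (simp add: lookup_unscale single_mult_shift mono_map_comp mono_map_nrange)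
  then show ?thesis by blast
qed

lemma unscale_mult_scaled:
  fixes A :: "('v,'k::comm_ring_1) mpoly set"
  assumes A: "is_ideal A"
  shows "\<forall>a\<in>A. unscale C (f * mono_map (scale C) a) \<in> A"
proof (induction f rule: poly_add_induct)
  case 1
  show ?case using is_idealD(1)[OF A] by (simp add: unscale_zero)
next
  case (2 m c)
  show ?case
  proof
    fix a assume a: "a \<in> A"
    have "single m c * mono_map (scale C) a = single m 1 * mono_map (scale C) (single 0 c * a)"
      by (simp add: mono_map_mult[OF scale_additive] additive_zero[OF scale_additive]
          mult_single mult.assoc[symmetric])
    moreover have "single m1 1 * (single 0 c * a) \<in> A" for m1
      using a by (intro is_idealD(3)[OF A])
    ultimately show "unscale C (single m c * mono_map (scale C) a) \<in> A"
      using unscale_monomial_mult[of m "single 0 c * a"] is_idealD(1)[OF A] by auto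
  qed
next
  case (3 p q)
  then show ?case using is_idealD(2)[OF A] by (simp add: distrib_right unscale_add)
qed

text \<open>The colon-type ideal \<open>Cs\<close> contains the substituted generators,
  hence the whole extension.\<close>

lemma contraction:
  fixes A :: "('v,'k::comm_ring_1) mpoly set"
  assumes A: "is_ideal A" and q: "mono_map (scale C) q \<in> ext C A"
  shows "q \<in> A"
proof -
  define Cs where "Cs = {p. \<forall>f. unscale C (f * p) \<in> A}"
  have "is_ideal Cs"
    unfolding is_ideal_def Cs_def
    using is_idealD(1,2)[OF A] by (simp add: unscale_zero distrib_left unscale_add mult.assoc[symmetric])
  moreover have "mono_map (scale C) ` A \<subseteq> Cs"
    unfolding Cs_def using unscale_mult_scaled[OF A] by blast
  ultimately have "ext C A \<subseteq> Cs" unfolding ext_def by (rule ideal_gen_least)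
  with q have "unscale C (1 * mono_map (scale C) q) \<in> A" unfolding Cs_def by blast
  then show ?thesis by (simp add: unscale_scale)
qed

lemma ext_inj:
  assumes "is_ideal A" "is_ideal B" "ext C A = ext C B"
  shows "A = B"
proof -
  have "X \<subseteq> Y" if "is_ideal Y" "ext C X = ext C Y" for X Y :: "('v,'k::comm_ring_1) mpoly set"
  proof
    fix x assume "x \<in> X"
    then have "mono_map (scale C) x \<in> ext C X" unfolding ext_def by (blast intro: ideal_gen_sub[THEN subsetD])
    then show "x \<in> Y" using that by (metis contraction)
  qed
  then show ?thesis using assms by blast
qed

end

lemma ext_gen: "ext C (ideal_gen S) = ext C S"
  unfolding ext_def by (rule ideal_gen_image_gen[OF scale_additive])

lemma ext_UNIV: "ext C (UNIV :: ('v::finite,'k::comm_ring_1) mpoly set) = UNIV"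
proof -
  have "(1 :: ('v,'k) mpoly) \<in> mono_map (scale C) ` UNIV"
    using mono_map_one[OF scale_additive] by (metis rangeI)
  then have "(1 :: ('v,'k) mpoly) \<in> ext C UNIV" unfolding ext_def by (rule subsetD[OF ideal_gen_sub])
  then show ?thesis unfolding ext_def by (intro ideal_one[OF is_ideal_gen])
qed

lemma ext_mult:
  fixes C :: "'v::finite \<Rightarrow> nat" and A B :: "('v,'k::comm_ring_1) mpoly set"
  shows "ext C (ideal_mult A B) = ideal_mult (ext C A) (ext C B)"
proof -
  let ?s = "mono_map (scale C) :: ('v,'k) mpoly \<Rightarrow> _"
  have img: "?s ` {x * y |x y. x \<in> A \<and> y \<in> B} = {s * t |s t. s \<in> ?s ` A \<and> t \<in> ?s ` B}"
  proof (intro equalityI subsetI)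
    fix z assume "z \<in> ?s ` {x * y |x y. x \<in> A \<and> y \<in> B}"
    then obtain x y where "x \<in> A" "y \<in> B" "z = ?s x * ?s y"
      by (auto simp: mono_map_mult[OF scale_additive])
    then show "z \<in> {s * t |s t. s \<in> ?s ` A \<and> t \<in> ?s ` B}" by blast
  next
    fix z assume "z \<in> {s * t |s t. s \<in> ?s ` A \<and> t \<in> ?s ` B}"
    then obtain x y where "x \<in> A" "y \<in> B" "z = ?s (x * y)"
      by (auto simp: mono_map_mult[OF scale_additive])
    then show "z \<in> ?s ` {x * y |x y. x \<in> A \<and> y \<in> B}" by blast
  qed
  have "ext C (ideal_mult A B) = ext C {x * y |x y. x \<in> A \<and> y \<in> B}"
    unfolding ideal_mult_def by (rule ext_gen)
  also have "\<dots> = ideal_gen {s * t |s t. s \<in> ?s ` A \<and> t \<in> ?s ` B}"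
    unfolding ext_def img ..
  also have "\<dots> = ideal_mult (ext C A) (ext C B)"
    unfolding ext_def by (rule ideal_mult_gen[symmetric])
  finally show ?thesis .
qed

lemma ext_pow: "ext C (ideal_pow A r) = ideal_pow (ext C A) r"
  by (induction r) (simp_all add: ext_UNIV ext_mult)

lemma ext_mono: "A \<subseteq> B \<Longrightarrow> ext C A \<subseteq> ext C B"
  unfolding ext_def by (intro ideal_gen_mono image_mono)

text \<open>Minimal generating sets are carried to minimal generating sets of the
  extension, because extension is injective on ideals.\<close>

lemma minimal_gens_ext:
  assumes Cpos: "\<forall>v. C v > 0" and A: "is_ideal A" and G: "minimal_gens G A"
  shows "minimal_gens (mono_map (scale C) ` G) (ext C A)"
  unfolding minimal_gens_def
proof (intro conjI allI impI)
  have genG: "ideal_gen G = A" using G by (simp add: minimal_gens_def)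
  then show gen: "ideal_gen (mono_map (scale C) ` G) = ext C A"
    using ext_gen[of C G] by (simp add: ext_def)
  fix H assume H: "H \<subset> mono_map (scale C) ` G"
  define H' where "H' = {g\<in>G. mono_map (scale C) g \<in> H}"
  have HH: "H = mono_map (scale C) ` H'" using H unfolding H'_def by blast
  have "H' \<subset> G" using H HH unfolding H'_def by blast
  then have ne: "ideal_gen H' \<noteq> A" using G by (simp add: minimal_gens_def)
  show "ideal_gen H \<noteq> ext C A"
  proof
    assume "ideal_gen H = ext C A"
    then have "ext C (ideal_gen H') = ext C A" unfolding HH ext_gen by (simp add: ext_def)
    then have "ideal_gen H' = A" by (rule ext_inj[OF Cpos is_ideal_gen A])
    with ne show False ..
  qed
qed

section \<open>Reductions under the substitution\<close>

lemma ext_reduction_eq_iff: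
  fixes P' I' :: "('v::finite,'k::comm_ring_1) mpoly set"
  assumes Cpos: "\<forall>v. C v > 0" and P: "ext C P' = P" and I: "ext C I' = I"
  shows "ideal_mult P (ideal_pow I r) = ideal_pow I (Suc r) \<longleftrightarrow>
         ideal_mult P' (ideal_pow I' r) = ideal_pow I' (Suc r)"
proof -
  have "ext C (ideal_mult P' (ideal_pow I' r)) = ideal_mult P (ideal_pow I r)"
    by (simp add: ext_mult ext_pow P I)
  moreover have "ext C (ideal_pow I' (Suc r)) = ideal_pow I (Suc r)"
    by (simp only: ext_pow I)
  ultimately show ?thesis
    using ext_inj[OF Cpos is_ideal_mult is_ideal_pow] by metis
qed

lemma ext_reduction:
  fixes P' I' :: "('v::finite,'k::comm_ring_1) mpoly set"
  assumes Cpos: "\<forall>v. C v > 0" and P: "ext C P' = P" and I: "ext C I' = I"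
    and red: "is_reduction P' I'"
  shows "is_reduction P I \<and> red_num P I = red_num P' I'"
proof -
  have eq_iff: "ideal_mult P (ideal_pow I r) = ideal_pow I (Suc r) \<longleftrightarrow>
      ideal_mult P' (ideal_pow I' r) = ideal_pow I' (Suc r)" for r
    by (rule ext_reduction_eq_iff[OF Cpos P I])
  have "P \<subseteq> I" using red ext_mono[of P' I' C] unfolding is_reduction_def P I by blast
  then have "is_reduction P I" using red unfolding is_reduction_def eq_iff by blast
  moreover have "red_num P I = red_num P' I'" unfolding red_num_def eq_iff ..
  ultimately show ?thesis ..
qed

section \<open>The Rees algebra and the substitution \<open>\<delta>\<close>\<close>

lemma lookup_rees_Some:
  "lookup (rees_mono a b m) (Some i) = lookup m (Inl i) + (\<Sum>j\<in>UNIV. lookup m (Inr j) * gen_exp a b j i)"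
  by (simp add: rees_mono_def)

lemma lookup_rees_None: "lookup (rees_mono a b m) None = (\<Sum>j\<in>UNIV. lookup m (Inr j))"
  by (simp add: rees_mono_def)

lemma rees_additive: "additive (rees_mono a b)"
  unfolding additive_def
proof (intro allI, rule poly_mapping_eqI)
  fix x y v
  show "lookup (rees_mono a b (x + y)) v = lookup (rees_mono a b x + rees_mono a b y) v"
    by (cases v) (simp_all add: lookup_rees_Some lookup_rees_None lookup_add sum.distrib distrib_right)
qed

lemma rees_ideal_kerm: "rees_ideal a b = kerm (rees_mono a b)"
  by (simp add: rees_ideal_def kerm_def)

lemma is_ideal_rees: "is_ideal (rees_ideal a b)"
  by (simp add: rees_ideal_kerm ker_ideal rees_additive)

abbreviation delta_weights :: "('n \<Rightarrow> nat) \<Rightarrow> 'n + 'n option \<Rightarrow> nat" where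
  "delta_weights c \<equiv> case_sum c (\<lambda>_. 1)"

lemma delta_weights_pos: "\<forall>i. c i > 0 \<Longrightarrow> \<forall>v. delta_weights c v > 0"
  by (simp split: sum.split)

lemma delta_scale: "delta c = mono_map (scale (delta_weights c))"
proof -
  have "delta_mono c = scale (delta_weights c)"
    by (intro ext poly_mapping_eqI) (simp add: delta_mono_def split: sum.split)
  then show ?thesis unfolding delta_def by simp
qed

lemma tdegs_delta:
  assumes "\<forall>i. c i > 0"
  shows "tdegs (delta c g) = tdegs g"
proof -
  have "tdegs (delta c g) = (tdeg \<circ> scale (delta_weights c)) ` keys g"
    unfolding tdegs_def delta_scale keys_mono_map_inj[OF scale_inj[OF delta_weights_pos[OF assms]]]
    by (simp add: image_comp)
  also have "tdeg \<circ> scale (delta_weights c) = tdeg" by (simp add: fun_eq_iff tdeg_def)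
  finally show ?thesis by (simp add: tdegs_def)
qed

lemma xmon_scale:
  "mono_map (scale c) (xmon v :: ('n::finite,'k::comm_ring_1) mpoly) = xmon (\<lambda>i. c i * v i)"
proof -
  have "scale c (Abs_poly_mapping v) = Abs_poly_mapping (\<lambda>i. c i * v i)"
    by (rule poly_mapping_eqI) simp
  then show ?thesis by (simp add: xmon_def)
qed

locale scaled_exponents =
  fixes a b a' b' c :: "'n::finite \<Rightarrow> nat"
  assumes c_pos: "\<forall>i. c i > 0"
    and a_eq: "\<And>i. a i = c i * a' i" and b_eq: "\<And>i. b i = c i * b' i"
begin

lemma gen_exp_eq: "gen_exp a b j i = c i * gen_exp a' b' j i"
  by (cases j) (auto simp: gen_exp_def a_eq b_eq)

lemma rees_mono_delta:
  "rees_mono a b \<circ> scale (delta_weights c) = scale (case_option 1 c) \<circ> rees_mono a' b'"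
proof (intro ext poly_mapping_eqI)
  fix m v
  show "lookup ((rees_mono a b \<circ> scale (delta_weights c)) m) v
      = lookup ((scale (case_option 1 c) \<circ> rees_mono a' b') m) v"
    by (cases v) (simp_all add: lookup_rees_Some lookup_rees_None gen_exp_eq
        sum_distrib_left distrib_left mult.left_commute)
qed

lemma delta_rees_subset: "delta c ` rees_ideal a' b' \<subseteq> rees_ideal a b"
proof
  fix z assume "z \<in> delta c ` rees_ideal a' b'"
  then obtain p where p: "mono_map (rees_mono a' b') p = 0" "z = delta c p"
    by (auto simp: rees_ideal_def)
  have "mono_map (rees_mono a b) z = mono_map (rees_mono a b \<circ> scale (delta_weights c)) p"
    by (simp add: p(2) delta_scale mono_map_comp)
  also have "\<dots> = mono_map (scale (case_option 1 c)) (mono_map (rees_mono a' b') p)"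
    unfolding rees_mono_delta by (simp add: mono_map_comp)
  finally show "z \<in> rees_ideal a b" using p(1) by (simp add: rees_ideal_def)
qed

text \<open>Two monomials with the same Rees image have the same remainders of their
  \<open>x\<^sub>i\<close>-exponents modulo \<open>c i\<close>, and the quotients have the same Rees image for \<open>(a',b')\<close>:
  they are \<open>x\<^sup>r \<delta>(m\<^sub>u)\<close> and \<open>x\<^sup>r \<delta>(m\<^sub>v)\<close> with \<open>x\<^sup>r\<close> a common factor.\<close>

lemma rees_fibre_division:
  assumes uv: "rees_mono a b u = rees_mono a b v"
  obtains r qu qv where "rees_mono a' b' qu = rees_mono a' b' qv"
    and "u = r + scale (delta_weights c) qu" and "v = r + scale (delta_weights c) qv"
proof -
  define r :: "'n + 'n option \<Rightarrow>\<^sub>0 nat"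
    where "r = Abs_poly_mapping (case_sum (\<lambda>i. lookup u (Inl i) mod c i) (\<lambda>_. 0))"
  define quot :: "('n + 'n option \<Rightarrow>\<^sub>0 nat) \<Rightarrow> 'n + 'n option \<Rightarrow>\<^sub>0 nat"
    where "quot m = Abs_poly_mapping (case_sum (\<lambda>i. lookup m (Inl i) div c i) (\<lambda>j. lookup m (Inr j)))" for m
  define Y :: "('n + 'n option \<Rightarrow>\<^sub>0 nat) \<Rightarrow> 'n \<Rightarrow> nat"
    where "Y m i = (\<Sum>j\<in>UNIV. lookup m (Inr j) * gen_exp a' b' j i)" for m i
  have lookup_Some: "lookup (rees_mono a b m) (Some i) = lookup m (Inl i) + c i * Y m i" for m i
    by (simp add: lookup_rees_Some gen_exp_eq Y_def sum_distrib_left mult.left_commute)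
  have key: "lookup u (Inl i) + c i * Y u i = lookup v (Inl i) + c i * Y v i" for i
    using arg_cong[OF uv, of "\<lambda>m. lookup m (Some i)"] by (simp only: lookup_Some)
  have mod_eq: "lookup u (Inl i) mod c i = lookup v (Inl i) mod c i" for i
    using arg_cong[OF key[of i], of "\<lambda>n. n mod c i"] by simp
  have div_eq: "lookup u (Inl i) div c i + Y u i = lookup v (Inl i) div c i + Y v i" for i
    using arg_cong[OF key[of i], of "\<lambda>n. n div c i"] c_pos[rule_format, of i] by simp
  have dec: "m = r + scale (delta_weights c) (quot m)"
    if "\<And>i. lookup m (Inl i) mod c i = lookup u (Inl i) mod c i" for m
    by (intro poly_mapping_eqI) (simp add: lookup_add r_def quot_def that[symmetric] split: sum.split)
  have "rees_mono a' b' (quot u) = rees_mono a' b' (quot v)"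
  proof (rule poly_mapping_eqI)
    fix x
    show "lookup (rees_mono a' b' (quot u)) x = lookup (rees_mono a' b' (quot v)) x"
    proof (cases x)
      case None
      then show ?thesis using arg_cong[OF uv, of "\<lambda>m. lookup m None"]
        by (simp add: lookup_rees_None quot_def)
    next
      case (Some i)
      then show ?thesis using div_eq[of i] by (simp add: lookup_rees_Some quot_def Y_def)
    qed
  qed
  then show ?thesis using that dec[of u] dec[of v] mod_eq by simp
qed

text \<open>Every
  generating binomial \<open>x\<^sup>u - x\<^sup>v\<close> of \<open>J\<close> is \<open>x\<^sup>r \<delta>(x\<^sup>q\<^sup>u - x\<^sup>q\<^sup>v)\<close> with the binomial in \<open>J'\<close>.\<close>

lemma rees_ideal_eq_delta:
  "(rees_ideal a b :: ('n + 'n option,'k::comm_ring_1) mpoly set) = ideal_gen (delta c ` rees_ideal a' b')"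
proof (rule subset_antisym)
  let ?E = "ideal_gen (delta c ` rees_ideal a' b') :: ('n + 'n option,'k) mpoly set"
  have "bin u v \<in> ?E" if uv: "rees_mono a b u = rees_mono a b v" for u v
  proof -
    obtain r qu qv where q: "rees_mono a' b' qu = rees_mono a' b' qv"
      and u: "u = r + scale (delta_weights c) qu" and v: "v = r + scale (delta_weights c) qv"
      using rees_fibre_division[OF uv] .
    have "bin qu qv \<in> rees_ideal a' b'"
      using bin_in_ker[of "rees_mono a' b'", OF q] by (simp add: rees_ideal_kerm)
    then have "delta c (bin qu qv) \<in> ?E" by (blast intro: ideal_gen_sub[THEN subsetD])
    moreover have "(bin u v :: ('n + 'n option,'k) mpoly) = single r 1 * delta c (bin qu qv)"
      unfolding u v delta_scale by (simp add: bin_def mono_map_diff mult_single right_diff_distrib)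
    ultimately show ?thesis using is_idealD(3)[OF is_ideal_gen] by metis
  qed
  then have "bins (rees_mono a b) \<subseteq> ?E" unfolding bins_def by blast
  then show "rees_ideal a b \<subseteq> ?E"
    using ker_span ideal_gen_least[OF is_ideal_gen] unfolding rees_ideal_def by blast
  show "?E \<subseteq> rees_ideal a b"
    by (rule ideal_gen_least[OF is_ideal_rees delta_rees_subset])
qed

lemma rees_ideal_eq_ext:
  "(rees_ideal a b :: ('n + 'n option,'k::comm_ring_1) mpoly set) = ext (delta_weights c) (rees_ideal a' b')"
  unfolding rees_ideal_eq_delta ext_def delta_scale ..

lemma rees_minimal_binomial_gens:
  "\<exists>G G' \<sigma>. finite G' \<and> minimal_gens G' (rees_ideal a' b' :: ('n + 'n option,'k::comm_ring_1) mpoly set)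
     \<and> minimal_gens G (rees_ideal a b :: ('n + 'n option,'k) mpoly set) \<and> (\<forall>g\<in>G. binomial g) \<and> (\<forall>g\<in>G'. binomial g)
     \<and> bij_betw \<sigma> G' G \<and> (\<forall>g\<in>G'. tdegs (\<sigma> g) = tdegs g)"
proof -
  let ?J' = "rees_ideal a' b' :: ('n + 'n option,'k) mpoly set"
  have W: "\<forall>v. delta_weights c v > 0" by (rule delta_weights_pos[OF c_pos])
  have inj: "inj (delta c :: ('n + 'n option,'k) mpoly \<Rightarrow> _)"
    unfolding delta_scale by (rule mono_map_inj[OF scale_inj[OF W]])
  obtain G0 where G0: "finite G0" "G0 \<subseteq> bins (rees_mono a' b')" "ideal_gen G0 = ?J'"
    using kernel_fin_gen[OF rees_additive[of a' b'], where 'k = 'k] by (auto simp: rees_ideal_kerm)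
  obtain G' where G': "G' \<subseteq> G0" "minimal_gens G' ?J'"
    using minimal_subset[OF G0(1,3)] by blast
  have bin': "\<forall>g\<in>G'. binomial g"
    using G'(1) G0(2) binomial_bin unfolding bins_def by blast
  have min: "minimal_gens (delta c ` G') (rees_ideal a b)"
    unfolding rees_ideal_eq_ext delta_scale by (rule minimal_gens_ext[OF W is_ideal_rees G'(2)])
  have bin: "\<forall>g\<in>delta c ` G'. binomial g"
    using bin' binomial_mono_map_inj[OF scale_inj[OF W]] unfolding delta_scale by blast
  have bij: "bij_betw (delta c) G' (delta c ` G')"
    using inj_on_subset[OF inj subset_UNIV] by (rule inj_on_imp_bij_betw)
  have fin: "finite G'" using G'(1) G0(1) by (rule finite_subset)
  have deg: "\<forall>g\<in>G'. tdegs (delta c g) = tdegs g" by (simp add: tdegs_delta[OF c_pos])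
  show ?thesis using fin G'(2) min bin bin' bij deg by blast
qed

lemma scale_pure_gens:
  "mono_map (scale c) ` (\<lambda>i. xmon (\<lambda>j. if j = i then a' i else 0)) ` UNIV
     = ((\<lambda>i. xmon (\<lambda>j. if j = i then a i else 0)) ` UNIV :: ('n,'k::comm_ring_1) mpoly set)"
proof -
  have "(\<lambda>j. c j * (if j = i then a' i else 0)) = (\<lambda>j. if j = i then a i else 0)" for i
    by (auto simp: a_eq)
  then show ?thesis by (simp add: image_image xmon_scale)
qed

lemma ext_pure_ideal: "ext c (pure_ideal a' :: ('n,'k::comm_ring_1) mpoly set) = pure_ideal a"
  unfolding pure_ideal_def ext_gen by (simp add: ext_def scale_pure_gens)

lemma ext_mon_ideal: "ext c (mon_ideal a' b' :: ('n,'k::comm_ring_1) mpoly set) = mon_ideal a b"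
proof -
  have "(\<lambda>i. c i * b' i) = b" by (simp add: b_eq fun_eq_iff)
  then show ?thesis
    unfolding mon_ideal_def ext_gen by (simp add: ext_def scale_pure_gens image_Un xmon_scale)
qed

end

lemma scaled_exponents_gcd:
  "scaled_exponents a b
     (\<lambda>i. if b i \<noteq> 0 then a i div gcd (a i) (b i) else a i)
     (\<lambda>i. if b i \<noteq> 0 then b i div gcd (a i) (b i) else 0)
     (\<lambda>i. if b i \<noteq> 0 then gcd (a i) (b i) else 1)"
  by unfold_locales auto

theorem mainTheorem6:
  fixes a b :: "'n::finite \<Rightarrow> nat"
  assumes lt: "\<forall>i. b i < a i"
    and two: "\<exists>i j. i \<noteq> j \<and> b i \<noteq> 0 \<and> b j \<noteq> 0"
  defines "a' \<equiv> (\<lambda>i. if b i \<noteq> 0 then a i div gcd (a i) (b i) else a i)"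
    and "b' \<equiv> (\<lambda>i. if b i \<noteq> 0 then b i div gcd (a i) (b i) else 0)"
    and "c \<equiv> (\<lambda>i. if b i \<noteq> 0 then gcd (a i) (b i) else 1)"
  shows "(rees_ideal a b :: ('n + 'n option, 'k::field) mpoly set) = ideal_gen (delta c ` (rees_ideal a' b' :: ('n + 'n option, 'k) mpoly set))
      \<and> (\<exists>G G' \<sigma>. finite G' \<and> minimal_gens G' (rees_ideal a' b' :: ('n + 'n option, 'k) mpoly set)
            \<and> minimal_gens G (rees_ideal a b :: ('n + 'n option, 'k) mpoly set) \<and> (\<forall>g\<in>G. binomial g) \<and> (\<forall>g\<in>G'. binomial g)
            \<and> bij_betw \<sigma> G' G \<and> (\<forall>g\<in>G'. tdegs (\<sigma> g) = tdegs g))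
      \<and> (is_reduction (pure_ideal a' :: ('n,'k) mpoly set) (mon_ideal a' b') \<longrightarrow>
           is_reduction (pure_ideal a :: ('n,'k) mpoly set) (mon_ideal a b)
           \<and> red_num (pure_ideal a :: ('n,'k) mpoly set) (mon_ideal a b)
             = red_num (pure_ideal a' :: ('n,'k) mpoly set) (mon_ideal a' b'))"
proof -
  interpret scaled_exponents a b a' b' c
    unfolding a'_def b'_def c_def by (rule scaled_exponents_gcd)
  show ?thesis
  proof (intro conjI impI)
    show "(rees_ideal a b :: ('n + 'n option, 'k) mpoly set) = ideal_gen (delta c ` rees_ideal a' b')"
      by (rule rees_ideal_eq_delta)
    show "\<exists>G G' \<sigma>. finite G' \<and> minimal_gens G' (rees_ideal a' b' :: ('n + 'n option, 'k) mpoly set)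
            \<and> minimal_gens G (rees_ideal a b :: ('n + 'n option, 'k) mpoly set) \<and> (\<forall>g\<in>G. binomial g)
            \<and> (\<forall>g\<in>G'. binomial g) \<and> bij_betw \<sigma> G' G \<and> (\<forall>g\<in>G'. tdegs (\<sigma> g) = tdegs g)"
      by (rule rees_minimal_binomial_gens)
  qed (use ext_reduction[OF c_pos ext_pure_ideal ext_mon_ideal] in blast)+
qed

end
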